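(* Let $h:(\mathbb{R}^n,0)\to(\mathbb{R}^n,0)$ be a bi-Lipschitz homeomorphism germ, let $A\subset\mathbb{R}^n$ be a set-germ at $0$ with $0\in\overline{A}$, and let $B\subset\mathbb{R}^n$ be a set-germ at $0$ with $0\in\overline{B}$. Assume that $A$ satisfies condition (SSP). Then $h(A)$ satisfies condition (SSP)-relative to $B$ if and only if $h(LD(A))$ satisfies condition (SSP)-relative to $B$.
   Context: For a set-germ $A\subset\mathbb{R}^n$ at $0$ with $0\in\overline A$, $D(A)=\{a\in S^{n-1}:\exists\, x_i\in A\setminus\{0\},\ x_i\to0,\ x_i/\|x_i\|\to a\}$ and $LD(A)=\{ta:a\in D(A),t\ge0\}$. For sequences, $\|u_m\|\ll\|v_m\|,\|w_m\|$ means $\|u_m\|/\|v_m\|\to0$ and $\|u_m\|/\|w_m\|\to0$. Given set-germs $A,B$ at $0$ with $0\in\overline A\cap\overline B$ and $D(A)\subseteq D(B)$, $A$ satisfies condition (SSP)-relative to $B$ if for every sequence $a_m\in B$ tending to $0$ with $\lim a_m/\|a_m\|\in D(A)$ there is a sequence $b_m\in A$ with $\|a_m-b_m\|\ll\|a_m\|,\|b_m\|$. Condition (SSP) (without reference) means (SSP)-relative to $\mathbb{R}^n$. A bi-Lipschitz homeomorphism germ is a homeomorphism germ $h$ with $h(0)=0$ and constants $0<K_1\le K_2$ with $K_1\|x-y\|\le\|h(x)-h(y)\|\le K_2\|x-y\|$ near $0$. *)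

theory Defs
  imports "HOL-Analysis.Analysis"
begin

text \<open>Set-germs at 0 in R^n are represented by subsets of real^'n.\<close>

definition Dir :: "(real^'n) set \<Rightarrow> (real^'n) set" where
  "Dir A = {a. \<exists>x::nat \<Rightarrow> real^'n. (\<forall>i. x i \<in> A - {0}) \<and> x \<longlonglongrightarrow> 0 \<and>
              (\<lambda>i. x i /\<^sub>R norm (x i)) \<longlonglongrightarrow> a}"

definition LD :: "(real^'n) set \<Rightarrow> (real^'n) set" where
  "LD A = {t *\<^sub>R a | t a. a \<in> Dir A \<and> t \<ge> 0}"

text \<open>Condition (SSP)-relative to B; the standing requirement D(A) \<subseteq> D(B)
  is included as part of the condition.\<close>
definition SSP_rel :: "(real^'n) set \<Rightarrow> (real^'n) set \<Rightarrow> bool" where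
  "SSP_rel A B \<longleftrightarrow> Dir A \<subseteq> Dir B \<and>
     (\<forall>a::nat \<Rightarrow> real^'n. (\<forall>m. a m \<in> B - {0}) \<and> a \<longlonglongrightarrow> 0 \<and>
        (\<exists>d\<in>Dir A. (\<lambda>m. a m /\<^sub>R norm (a m)) \<longlonglongrightarrow> d) \<longrightarrow>
        (\<exists>b::nat \<Rightarrow> real^'n. (\<forall>m. b m \<in> A) \<and>
           (\<lambda>m. norm (a m - b m) / norm (a m)) \<longlonglongrightarrow> 0 \<and>
           (\<lambda>m. norm (a m - b m) / norm (b m)) \<longlonglongrightarrow> 0))"

definition SSP :: "(real^'n) set \<Rightarrow> bool" where
  "SSP A \<longleftrightarrow> SSP_rel A UNIV"

end

theory Submission
  imports Defs
begin

text \<open>Call sequences a, b asymptotically close if |a_m - b_m| = o(|a_m|). This is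
  an equivalence relation that preserves limit directions, and bi-Lipschitz maps fixing 0 preserve
  it. By compactness of the sphere, applied along subsequences, every sequence of A tending to 0 is
  asymptotically close to one of LD(A) (rescale a nearby limit direction), and under (SSP) every
  sequence of LD(A) tending to 0 is asymptotically close to one of A. Hence h(A) and h(LD(A))
  approximate each other: they have the same directions, and (SSP)-relative to B passes from one
  to the other by transitivity of asymptotic closeness.\<close>

definition asymp_close :: "(nat \<Rightarrow> 'a::real_normed_vector) \<Rightarrow> (nat \<Rightarrow> 'a) \<Rightarrow> bool" where
  "asymp_close a b \<longleftrightarrow> (\<forall>e>0. \<forall>\<^sub>F m in sequentially. norm (a m - b m) \<le> e * norm (a m))"

lemma asymp_closeD:
  "asymp_close a b \<Longrightarrow> e > 0 \<Longrightarrow> \<forall>\<^sub>F m in sequentially. norm (a m - b m) \<le> e * norm (a m)"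
  unfolding asymp_close_def by blast

lemma asymp_close_iff_ratio_tendsto:
  assumes nz: "\<forall>\<^sub>F m in sequentially. a m \<noteq> 0"
  shows "asymp_close a b \<longleftrightarrow> (\<lambda>m. norm (a m - b m) / norm (a m)) \<longlonglongrightarrow> 0"
proof
  assume close: "asymp_close a b"
  show "(\<lambda>m. norm (a m - b m) / norm (a m)) \<longlonglongrightarrow> 0"
  proof (rule tendstoI)
    fix e :: real
    assume "e > 0"
    have "\<forall>\<^sub>F m in sequentially. norm (a m - b m) \<le> e/2 * norm (a m)"
      by (rule asymp_closeD[OF close]) (use \<open>e > 0\<close> in simp)
    with nz show "\<forall>\<^sub>F m in sequentially. dist (norm (a m - b m) / norm (a m)) 0 < e"
    proof eventually_elim
      case (elim m)
      moreover have "e/2 * norm (a m) < e * norm (a m)"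
        using elim \<open>e > 0\<close> by simp
      ultimately have "norm (a m - b m) < e * norm (a m)"
        by linarith
      with elim show ?case by (simp add: divide_less_eq)
    qed
  qed
next
  assume ratio: "(\<lambda>m. norm (a m - b m) / norm (a m)) \<longlonglongrightarrow> 0"
  show "asymp_close a b"
    unfolding asymp_close_def
  proof (intro allI impI)
    fix e :: real
    assume "e > 0"
    from tendstoD[OF ratio this] nz
    show "\<forall>\<^sub>F m in sequentially. norm (a m - b m) \<le> e * norm (a m)"
      by eventually_elim (simp add: divide_less_eq)
  qed
qed

lemma asymp_close_norm_bounds:
  assumes "asymp_close a b"
  shows "\<forall>\<^sub>F m in sequentially. norm (b m) \<le> 2 * norm (a m) \<and> norm (a m) \<le> 2 * norm (b m)"
proof -
  have "\<forall>\<^sub>F m in sequentially. norm (a m - b m) \<le> 1/2 * norm (a m)"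
    by (rule asymp_closeD[OF assms]) simp
  then show ?thesis
  proof eventually_elim
    case (elim m)
    have "norm (b m) \<le> norm (a m) + norm (a m - b m)"
      by (metis norm_minus_commute norm_triangle_sub)
    moreover have "norm (a m) \<le> norm (b m) + norm (a m - b m)"
      by (rule norm_triangle_sub)
    ultimately show ?case
      using elim by linarith
  qed
qed

lemma asymp_close_sym:
  assumes "asymp_close a b"
  shows "asymp_close b a"
  unfolding asymp_close_def
proof (intro allI impI)
  fix e :: real
  assume "e > 0"
  have "\<forall>\<^sub>F m in sequentially. norm (a m - b m) \<le> e/2 * norm (a m)"
    by (rule asymp_closeD[OF assms]) (use \<open>e > 0\<close> in simp)
  with asymp_close_norm_bounds[OF assms]
  show "\<forall>\<^sub>F m in sequentially. norm (b m - a m) \<le> e * norm (b m)"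
  proof eventually_elim
    case (elim m)
    then have "e/2 * norm (a m) \<le> e/2 * (2 * norm (b m))"
      using \<open>e > 0\<close> by (intro mult_left_mono) auto
    with elim show ?case by (simp add: norm_minus_commute)
  qed
qed

lemma asymp_close_trans:
  assumes ab: "asymp_close a b" and bc: "asymp_close b c"
  shows "asymp_close a c"
  unfolding asymp_close_def
proof (intro allI impI)
  fix e :: real
  assume "e > 0"
  have "\<forall>\<^sub>F m in sequentially. norm (a m - b m) \<le> e/3 * norm (a m)"
    by (rule asymp_closeD[OF ab]) (use \<open>e > 0\<close> in simp)
  moreover have "\<forall>\<^sub>F m in sequentially. norm (b m - c m) \<le> e/3 * norm (b m)"
    by (rule asymp_closeD[OF bc]) (use \<open>e > 0\<close> in simp)
  moreover note asymp_close_norm_bounds[OF ab]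
  ultimately show "\<forall>\<^sub>F m in sequentially. norm (a m - c m) \<le> e * norm (a m)"
  proof eventually_elim
    case (elim m)
    have "norm (a m - c m) \<le> norm (a m - b m) + norm (b m - c m)"
      by (rule norm_diff_triangle_le[of _ "b m"]) simp_all
    moreover have "e/3 * norm (b m) \<le> e/3 * (2 * norm (a m))"
      using elim \<open>e > 0\<close> by (intro mult_left_mono) auto
    ultimately show ?case using elim by linarith
  qed
qed

lemma asymp_close_eventually_cong:
  assumes "asymp_close a b"
    and "\<forall>\<^sub>F m in sequentially. a m = a' m" and "\<forall>\<^sub>F m in sequentially. b m = b' m"
  shows "asymp_close a' b'"
  unfolding asymp_close_def
proof (intro allI impI)
  fix e :: real
  assume "e > 0"
  from asymp_closeD[OF assms(1) this] assms(2,3)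
  show "\<forall>\<^sub>F m in sequentially. norm (a' m - b' m) \<le> e * norm (a' m)"
    by eventually_elim simp
qed

lemma asymp_close_tendsto_zero:
  assumes "asymp_close a b" and "a \<longlonglongrightarrow> 0"
  shows "b \<longlonglongrightarrow> 0"
proof (rule Lim_null_comparison)
  show "\<forall>\<^sub>F m in sequentially. norm (b m) \<le> 2 * norm (a m)"
    using asymp_close_norm_bounds[OF assms(1)] by (rule eventually_mono) simp
  show "(\<lambda>m. 2 * norm (a m)) \<longlonglongrightarrow> 0"
    using tendsto_mult_right_zero[OF tendsto_norm_zero[OF assms(2)]] .
qed

lemma asymp_close_eventually_nonzero:
  assumes "asymp_close a b" and "\<forall>\<^sub>F m in sequentially. a m \<noteq> 0"
  shows "\<forall>\<^sub>F m in sequentially. b m \<noteq> 0"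
  using asymp_close_norm_bounds[OF assms(1)] assms(2) by eventually_elim auto

lemma norm_normalize_diff_le:
  fixes x y :: "'a::real_normed_vector"
  assumes "x \<noteq> 0"
  shows "norm (x /\<^sub>R norm x - y /\<^sub>R norm y) \<le> 2 * norm (x - y) / norm x"
proof (cases "y = 0")
  case True
  with assms show ?thesis by simp
next
  case False
  have coeff: "inverse (norm x) - inverse (norm y) = (norm y - norm x) / (norm x * norm y)"
    using assms False by (simp add: field_simps)
  have "x /\<^sub>R norm x - y /\<^sub>R norm y = (x - y) /\<^sub>R norm x + ((norm y - norm x) / (norm x * norm y)) *\<^sub>R y"
    unfolding coeff[symmetric] by (simp add: algebra_simps)
  then have "norm (x /\<^sub>R norm x - y /\<^sub>R norm y)
      \<le> norm ((x - y) /\<^sub>R norm x) + norm (((norm y - norm x) / (norm x * norm y)) *\<^sub>R y)"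
    by (simp only: norm_triangle_ineq)
  moreover have "norm ((x - y) /\<^sub>R norm x) = norm (x - y) / norm x"
    by (simp add: divide_inverse_commute)
  moreover have "norm (((norm y - norm x) / (norm x * norm y)) *\<^sub>R y) = \<bar>norm y - norm x\<bar> / norm x"
    using False by (simp add: abs_mult)
  moreover have "\<bar>norm y - norm x\<bar> / norm x \<le> norm (x - y) / norm x"
    by (rule divide_right_mono) (auto simp: norm_triangle_ineq3 abs_minus_commute)
  ultimately show ?thesis
    by simp
qed

lemma asymp_close_direction:
  assumes close: "asymp_close a b" and nz: "\<forall>\<^sub>F m in sequentially. a m \<noteq> 0"
    and dir: "(\<lambda>m. a m /\<^sub>R norm (a m)) \<longlonglongrightarrow> d"
  shows "(\<lambda>m. b m /\<^sub>R norm (b m)) \<longlonglongrightarrow> d"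
proof -
  have "(\<lambda>m. b m /\<^sub>R norm (b m) - a m /\<^sub>R norm (a m)) \<longlonglongrightarrow> 0"
  proof (rule Lim_null_comparison)
    show "\<forall>\<^sub>F m in sequentially. norm (b m /\<^sub>R norm (b m) - a m /\<^sub>R norm (a m)) \<le> 2 * norm (a m - b m) / norm (a m)"
      using nz by eventually_elim (metis norm_normalize_diff_le norm_minus_commute)
    show "(\<lambda>m. 2 * norm (a m - b m) / norm (a m)) \<longlonglongrightarrow> 0"
      using tendsto_mult_right_zero[OF close[unfolded asymp_close_iff_ratio_tendsto[OF nz]], of 2]
      by simp
  qed
  from tendsto_add[OF this dir] show ?thesis
    by simp
qed

lemma norm_mem_Dir: "d \<in> Dir A \<Longrightarrow> norm d = 1"
proof -
  assume "d \<in> Dir A"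
  then obtain x where x: "\<forall>i. x i \<in> A - {0}" "(\<lambda>i. x i /\<^sub>R norm (x i)) \<longlonglongrightarrow> d"
    unfolding Dir_def by auto
  have "(\<lambda>i. norm (x i /\<^sub>R norm (x i))) \<longlonglongrightarrow> norm d"
    using tendsto_norm[OF x(2)] .
  moreover have "(\<lambda>i. norm (x i /\<^sub>R norm (x i))) = (\<lambda>i. 1)"
    using x(1) by auto
  ultimately show "norm d = 1"
    using LIMSEQ_unique tendsto_const by metis
qed

lemma scaleR_mem_LD: "a \<in> Dir A \<Longrightarrow> t \<ge> 0 \<Longrightarrow> t *\<^sub>R a \<in> LD A"
  unfolding LD_def by blast

lemma LD_normalize_mem_Dir:
  assumes "y \<in> LD A" and "y \<noteq> 0"
  shows "y /\<^sub>R norm y \<in> Dir A"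
proof -
  obtain t a where ta: "y = t *\<^sub>R a" "a \<in> Dir A" "t \<ge> 0"
    using assms(1) unfolding LD_def by auto
  with assms(2) have "t > 0"
    by (cases "t = 0") auto
  with ta norm_mem_Dir[OF ta(2)] show ?thesis
    by simp
qed

lemma closed_Dir: "closed (Dir (A :: (real^'n) set))"
  unfolding closed_sequential_limits
proof (intro allI impI, elim conjE)
  fix a :: "nat \<Rightarrow> real^'n" and d
  assume a: "\<forall>k. a k \<in> Dir A" and ad: "a \<longlonglongrightarrow> d"
  have "\<exists>z. z \<in> A - {0} \<and> norm z < 1 / Suc k \<and> norm (z /\<^sub>R norm z - a k) < 1 / Suc k" for k
  proof -
    obtain x where x: "\<forall>i. x i \<in> A - {0}" "x \<longlonglongrightarrow> 0" "(\<lambda>i. x i /\<^sub>R norm (x i)) \<longlonglongrightarrow> a k"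
      using a unfolding Dir_def by auto
    have "\<forall>\<^sub>F i in sequentially. dist (x i) 0 < 1 / Suc k \<and> dist (x i /\<^sub>R norm (x i)) (a k) < 1 / Suc k"
      using tendstoD[OF x(2)] tendstoD[OF x(3)] by (simp add: eventually_conj)
    then obtain i where "dist (x i) 0 < 1 / Suc k" "dist (x i /\<^sub>R norm (x i)) (a k) < 1 / Suc k"
      by (auto dest: eventually_happens)
    with x(1) show ?thesis
      by (auto simp: dist_norm)
  qed
  then obtain z where z: "\<And>k. z k \<in> A - {0}" "\<And>k. norm (z k) < 1 / Suc k"
      "\<And>k. norm (z k /\<^sub>R norm (z k) - a k) < 1 / Suc k"
    by metis
  have inv: "(\<lambda>k. 1 / real (Suc k)) \<longlonglongrightarrow> 0"
    by (rule LIMSEQ_Suc[OF lim_inverse_n'])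
  have "z \<longlonglongrightarrow> 0"
    by (rule Lim_null_comparison[OF _ inv]) (use z(2) in \<open>auto intro: always_eventually less_imp_le\<close>)
  moreover have "(\<lambda>k. z k /\<^sub>R norm (z k) - a k) \<longlonglongrightarrow> 0"
    by (rule Lim_null_comparison[OF _ inv]) (use z(3) in \<open>auto intro: always_eventually less_imp_le\<close>)
  then have "(\<lambda>k. z k /\<^sub>R norm (z k)) \<longlonglongrightarrow> d"
    using tendsto_add[OF _ ad] by fastforce
  ultimately show "d \<in> Dir A"
    unfolding Dir_def using z(1) by blast
qed

lemma direction_convergent_subseq:
  fixes x :: "nat \<Rightarrow> 'a::euclidean_space"
  assumes "\<forall>m. x m \<noteq> 0"
  obtains s d where "strict_mono s" "(\<lambda>k. x (s k) /\<^sub>R norm (x (s k))) \<longlonglongrightarrow> d"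
proof -
  have "\<forall>m. x m /\<^sub>R norm (x m) \<in> sphere 0 1"
    using assms by auto
  with compact_sphere[of 0 1] obtain d s where "strict_mono s" "((\<lambda>m. x m /\<^sub>R norm (x m)) \<circ> s) \<longlonglongrightarrow> d"
    unfolding compact_def by meson
  with that show ?thesis
    by (auto simp: o_def)
qed

lemma Dir_subseqI:
  assumes "\<forall>m. x m \<in> A - {0}" and "x \<longlonglongrightarrow> 0" and "strict_mono r"
    and "(\<lambda>k. x (r k) /\<^sub>R norm (x (r k))) \<longlonglongrightarrow> d"
  shows "d \<in> Dir A"
  using assms LIMSEQ_subseq_LIMSEQ[OF assms(2,3)] unfolding Dir_def by (auto simp: o_def)

lemma LIMSEQ_of_subsubsequences:
  fixes f :: "nat \<Rightarrow> 'a::metric_space"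
  assumes "\<And>r::nat \<Rightarrow> nat. strict_mono r \<Longrightarrow> \<exists>s::nat \<Rightarrow> nat. strict_mono s \<and> (\<lambda>k. f (r (s k))) \<longlonglongrightarrow> L"
  shows "f \<longlonglongrightarrow> L"
proof (rule ccontr)
  assume "\<not> f \<longlonglongrightarrow> L"
  then obtain e where "e > 0" and "\<not> (\<forall>\<^sub>F n in sequentially. dist (f n) L < e)"
    unfolding tendsto_iff by auto
  then have "infinite {n. \<not> dist (f n) L < e}"
    by (simp add: cofinite_eq_sequentially not_eventually frequently_cofinite[symmetric])
  then obtain r :: "nat \<Rightarrow> nat" where r: "strict_mono r" "\<And>n. \<not> dist (f (r n)) L < e"
    using infinite_enumerate by blast
  obtain s where "(\<lambda>k. f (r (s k))) \<longlonglongrightarrow> L"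
    using assms[OF r(1)] by blast
  from eventually_happens[OF tendstoD[OF this \<open>e > 0\<close>]] r(2) show False
    by auto
qed

lemma infdist_lessE:
  assumes "A \<noteq> {}" and "infdist x A < r"
  obtains y where "y \<in> A" and "dist x y < r"
  using assms by (auto simp: infdist_notempty cINF_less_iff)

(* Approximations along subsequences of subsequences glue into a single sequence: choose
   near-minimisers of the distance to S. *)
lemma asymp_close_to_set:
  assumes nz: "\<forall>m. x m \<noteq> 0"
    and sub: "\<And>r::nat \<Rightarrow> nat. strict_mono r \<Longrightarrow> \<exists>(s::nat \<Rightarrow> nat) b. strict_mono s \<and> (\<forall>k. b k \<in> S) \<and>
                    (\<lambda>k. norm (x (r (s k)) - b k) / norm (x (r (s k)))) \<longlonglongrightarrow> 0"
  obtains y where "\<forall>m. y m \<in> S" and "asymp_close x y"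
proof -
  have "S \<noteq> {}"
    using sub[of id] by (auto simp: strict_mono_def)
  define g where "g m = infdist (x m) S / norm (x m)" for m
  have g: "g \<longlonglongrightarrow> 0"
  proof (rule LIMSEQ_of_subsubsequences)
    fix r :: "nat \<Rightarrow> nat"
    assume "strict_mono r"
    then obtain s b where s: "strict_mono s" "\<forall>k. b k \<in> S"
      and lim: "(\<lambda>k. norm (x (r (s k)) - b k) / norm (x (r (s k)))) \<longlonglongrightarrow> 0"
      using sub by blast
    have "(\<lambda>k. g (r (s k))) \<longlonglongrightarrow> 0"
    proof (rule Lim_null_comparison[OF always_eventually lim], intro allI)
      fix k
      have "infdist (x (r (s k))) S \<le> norm (x (r (s k)) - b k)"
        using infdist_le[OF s(2)[rule_format]] by (simp add: dist_norm)
      then show "norm (g (r (s k))) \<le> norm (x (r (s k)) - b k) / norm (x (r (s k)))"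
        by (simp add: g_def divide_right_mono infdist_nonneg)
    qed
    with s(1) show "\<exists>s. strict_mono s \<and> (\<lambda>k. g (r (s k))) \<longlonglongrightarrow> 0"
      by blast
  qed
  have "\<exists>z. z \<in> S \<and> dist (x m) z < infdist (x m) S + norm (x m) / Suc m" for m
    by (rule infdist_lessE[OF \<open>S \<noteq> {}\<close>]) (use nz in auto)
  then obtain y where y: "\<And>m. y m \<in> S" "\<And>m. dist (x m) (y m) < infdist (x m) S + norm (x m) / Suc m"
    by metis
  have "(\<lambda>m. norm (x m - y m) / norm (x m)) \<longlonglongrightarrow> 0"
  proof (rule Lim_null_comparison)
    show "(\<lambda>m. g m + 1 / Suc m) \<longlonglongrightarrow> 0"
      using tendsto_add[OF g LIMSEQ_Suc[OF lim_inverse_n']] by simp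
    show "\<forall>\<^sub>F m in sequentially. norm (norm (x m - y m) / norm (x m)) \<le> g m + 1 / Suc m"
    proof (intro always_eventually allI)
      fix m
      have "(g m + 1 / Suc m) * norm (x m) = infdist (x m) S + norm (x m) / Suc m"
        using nz by (simp add: g_def distrib_right)
      with y(2)[of m] have "norm (x m - y m) \<le> (g m + 1 / Suc m) * norm (x m)"
        by (simp add: dist_norm)
      with nz show "norm (norm (x m - y m) / norm (x m)) \<le> g m + 1 / Suc m"
        by (simp add: divide_le_eq)
    qed
  qed
  with nz have "asymp_close x y"
    by (simp add: asymp_close_iff_ratio_tendsto)
  with y(1) that show ?thesis
    by blast
qed

definition approximated_by :: "'a::real_normed_vector set \<Rightarrow> 'a set \<Rightarrow> bool" where
  "approximated_by X Y \<longleftrightarrow>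
     (\<forall>a. (\<forall>m. a m \<in> X - {0}) \<and> a \<longlonglongrightarrow> 0 \<longrightarrow> (\<exists>b. (\<forall>m. b m \<in> Y) \<and> asymp_close a b))"

lemma approximated_by_LD: "approximated_by (A :: (real^'n) set) (LD A)"
  unfolding approximated_by_def
proof (intro allI impI, elim conjE)
  fix x :: "nat \<Rightarrow> real^'n"
  assume x: "\<forall>m. x m \<in> A - {0}" "x \<longlonglongrightarrow> 0"
  show "\<exists>y. (\<forall>m. y m \<in> LD A) \<and> asymp_close x y"
  proof (rule asymp_close_to_set)
    show "\<forall>m. x m \<noteq> 0"
      using x(1) by blast
    fix r :: "nat \<Rightarrow> nat"
    assume r: "strict_mono r"
    obtain s d where s: "strict_mono s" and lim: "(\<lambda>k. x (r (s k)) /\<^sub>R norm (x (r (s k)))) \<longlonglongrightarrow> d"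
      using direction_convergent_subseq[of "\<lambda>k. x (r k)"] x(1) by blast
    have "d \<in> Dir A"
      using Dir_subseqI[OF x strict_mono_o[OF r s]] lim by (simp add: o_def)
    then have "\<forall>k. norm (x (r (s k))) *\<^sub>R d \<in> LD A"
      by (simp add: scaleR_mem_LD)
    moreover have "(\<lambda>k. norm (x (r (s k)) - norm (x (r (s k))) *\<^sub>R d) / norm (x (r (s k)))) \<longlonglongrightarrow> 0"
    proof -
      have "norm (z - norm z *\<^sub>R d) / norm z = norm (z /\<^sub>R norm z - d)" if "z \<noteq> 0" for z :: "real^'n"
      proof -
        have "z - norm z *\<^sub>R d = norm z *\<^sub>R (z /\<^sub>R norm z - d)"
          using that by (simp add: scaleR_diff_right)
        with that show ?thesis
          by simp
      qed
      with x(1) show ?thesis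
        using tendsto_norm_zero[OF LIM_zero[OF lim]] by simp
    qed
    ultimately show "\<exists>s b. strict_mono s \<and> (\<forall>k. b k \<in> LD A) \<and>
        (\<lambda>k. norm (x (r (s k)) - b k) / norm (x (r (s k)))) \<longlonglongrightarrow> 0"
      using s by (intro exI[of _ s] exI[of _ "\<lambda>k. norm (x (r (s k))) *\<^sub>R d"]) simp
  qed blast
qed

lemma SSP_imp_LD_approximated_by:
  fixes A :: "(real^'n) set"
  assumes "SSP A"
  shows "approximated_by (LD A) A"
  unfolding approximated_by_def
proof (intro allI impI, elim conjE)
  fix y :: "nat \<Rightarrow> real^'n"
  assume y: "\<forall>m. y m \<in> LD A - {0}" "y \<longlonglongrightarrow> 0"
  show "\<exists>x. (\<forall>m. x m \<in> A) \<and> asymp_close y x"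
  proof (rule asymp_close_to_set)
    show nz: "\<forall>m. y m \<noteq> 0"
      using y(1) by blast
    fix r :: "nat \<Rightarrow> nat"
    assume r: "strict_mono r"
    obtain s d where s: "strict_mono s" and lim: "(\<lambda>k. y (r (s k)) /\<^sub>R norm (y (r (s k)))) \<longlonglongrightarrow> d"
      using direction_convergent_subseq[of "\<lambda>k. y (r k)"] nz by blast
    have "d \<in> Dir A"
      by (rule closed_sequentially[OF closed_Dir _ lim]) (use y(1) in \<open>auto intro: LD_normalize_mem_Dir\<close>)
    moreover have "(\<lambda>k. y (r (s k))) \<longlonglongrightarrow> 0"
      using LIMSEQ_subseq_LIMSEQ[OF y(2) strict_mono_o[OF r s]] by (simp add: o_def)
    ultimately obtain b where "\<forall>k. b k \<in> A" "(\<lambda>k. norm (y (r (s k)) - b k) / norm (y (r (s k)))) \<longlonglongrightarrow> 0"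
      using assms[unfolded SSP_def SSP_rel_def, THEN conjunct2, rule_format, of "\<lambda>k. y (r (s k))"] nz lim
      by auto
    with s show "\<exists>s b. strict_mono s \<and> (\<forall>k. b k \<in> A) \<and>
        (\<lambda>k. norm (y (r (s k)) - b k) / norm (y (r (s k)))) \<longlonglongrightarrow> 0"
      by blast
  qed blast
qed

lemma approximated_byE:
  assumes "approximated_by X Y" and "\<forall>m. a m \<in> X" and "a \<longlonglongrightarrow> 0"
    and "\<forall>\<^sub>F m in sequentially. a m \<noteq> 0"
  obtains b where "\<forall>m. b m \<in> Y" and "asymp_close a b"
proof -
  obtain N where N: "\<And>m. m \<ge> N \<Longrightarrow> a m \<noteq> 0"
    using assms(4) unfolding eventually_sequentially by blast
  define a' where "a' m = a (max m N)" for m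
  have eq: "\<forall>\<^sub>F m in sequentially. a' m = a m"
    by (rule eventually_sequentiallyI[of N]) (simp add: a'_def)
  have "\<forall>m. a' m \<in> X - {0}"
    using assms(2) N unfolding a'_def by simp
  moreover have "a' \<longlonglongrightarrow> 0"
    using assms(3) by (simp add: tendsto_cong[OF eq])
  ultimately obtain b where b: "\<forall>m. b m \<in> Y" and close: "asymp_close a' b"
    using assms(1) unfolding approximated_by_def by blast
  from close have "asymp_close a b"
    by (rule asymp_close_eventually_cong[OF _ eq always_eventually]) simp
  with b that show ?thesis
    by blast
qed

lemma approximated_by_Dir_subset:
  assumes "approximated_by X Y"
  shows "Dir X \<subseteq> Dir Y"
proof
  fix d
  assume "d \<in> Dir X"
  then obtain x where x: "\<forall>i. x i \<in> X - {0}" "x \<longlonglongrightarrow> 0" and dir: "(\<lambda>i. x i /\<^sub>R norm (x i)) \<longlonglongrightarrow> d"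
    unfolding Dir_def by auto
  then obtain b where b: "\<forall>m. b m \<in> Y" "asymp_close x b"
    using assms unfolding approximated_by_def by blast
  have nz: "\<forall>\<^sub>F m in sequentially. x m \<noteq> 0"
    using x(1) by auto
  obtain N where N: "\<And>m. m \<ge> N \<Longrightarrow> b m \<noteq> 0"
    using asymp_close_eventually_nonzero[OF b(2) nz] unfolding eventually_sequentially by blast
  have "\<forall>i. b (i + N) \<in> Y - {0}"
    using b(1) N by auto
  moreover have "(\<lambda>i. b (i + N)) \<longlonglongrightarrow> 0"
    using LIMSEQ_ignore_initial_segment[OF asymp_close_tendsto_zero[OF b(2) x(2)]] .
  moreover have "(\<lambda>i. b (i + N) /\<^sub>R norm (b (i + N))) \<longlonglongrightarrow> d"
    using LIMSEQ_ignore_initial_segment[OF asymp_close_direction[OF b(2) nz dir]] .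
  ultimately show "d \<in> Dir Y"
    unfolding Dir_def by (intro CollectI exI[of _ "\<lambda>i. b (i + N)"]) simp
qed

lemma SSP_rel_transfer:
  fixes B :: "(real^'n) set"
  assumes ssp: "SSP_rel Y B" and approx: "approximated_by Y X" and Dir_eq: "Dir X = Dir Y"
  shows "SSP_rel X B"
  unfolding SSP_rel_def
proof (intro conjI allI impI)
  show "Dir X \<subseteq> Dir B"
    using ssp Dir_eq unfolding SSP_rel_def by simp
  fix a :: "nat \<Rightarrow> real^'n"
  assume a: "(\<forall>m. a m \<in> B - {0}) \<and> a \<longlonglongrightarrow> 0 \<and> (\<exists>d\<in>Dir X. (\<lambda>m. a m /\<^sub>R norm (a m)) \<longlonglongrightarrow> d)"
  then have nz: "\<forall>\<^sub>F m in sequentially. a m \<noteq> 0" and a0: "a \<longlonglongrightarrow> 0"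
    by auto
  obtain c where c: "\<forall>m. c m \<in> Y" "(\<lambda>m. norm (a m - c m) / norm (a m)) \<longlonglongrightarrow> 0"
    using ssp a Dir_eq unfolding SSP_rel_def by blast
  then have ac: "asymp_close a c"
    by (simp add: asymp_close_iff_ratio_tendsto[OF nz])
  obtain b where b: "\<forall>m. b m \<in> X" and cb: "asymp_close c b"
    using approximated_byE[OF approx c(1) asymp_close_tendsto_zero[OF ac a0] asymp_close_eventually_nonzero[OF ac nz]] .
  have ab: "asymp_close a b"
    using asymp_close_trans[OF ac cb] .
  have "(\<lambda>m. norm (b m - a m) / norm (b m)) \<longlonglongrightarrow> 0"
    using asymp_close_sym[OF ab] asymp_close_iff_ratio_tendsto[OF asymp_close_eventually_nonzero[OF ab nz]]
    by blast
  then have "(\<lambda>m. norm (a m - b m) / norm (b m)) \<longlonglongrightarrow> 0"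
    by (simp only: norm_minus_commute)
  moreover have "(\<lambda>m. norm (a m - b m) / norm (a m)) \<longlonglongrightarrow> 0"
    using ab by (simp add: asymp_close_iff_ratio_tendsto[OF nz])
  ultimately show "\<exists>b. (\<forall>m. b m \<in> X) \<and> (\<lambda>m. norm (a m - b m) / norm (a m)) \<longlonglongrightarrow> 0 \<and>
      (\<lambda>m. norm (a m - b m) / norm (b m)) \<longlonglongrightarrow> 0"
    using b by (intro exI[of _ b]) simp
qed

lemma asymp_close_bilipschitz_image:
  fixes h :: "'a::real_normed_vector \<Rightarrow> 'b::real_normed_vector"
  assumes bilip: "\<forall>x\<in>U. \<forall>y\<in>U. K1 * norm (x - y) \<le> norm (h x - h y) \<and> norm (h x - h y) \<le> K2 * norm (x - y)"
    and "0 \<in> U" and "h 0 = 0" and "0 < K1" and "K1 \<le> K2"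
    and x: "\<forall>m. x m \<in> U" and z: "\<forall>m. z m \<in> U" and close: "asymp_close x z"
  shows "asymp_close (\<lambda>m. h (x m)) (\<lambda>m. h (z m))"
  unfolding asymp_close_def
proof (intro allI impI)
  fix e :: real
  assume "e > 0"
  with \<open>0 < K1\<close> \<open>K1 \<le> K2\<close> have "\<forall>\<^sub>F m in sequentially. norm (x m - z m) \<le> (e * K1 / K2) * norm (x m)"
    by (intro asymp_closeD[OF close]) simp
  then show "\<forall>\<^sub>F m in sequentially. norm (h (x m) - h (z m)) \<le> e * norm (h (x m))"
  proof (rule eventually_mono)
    fix m
    assume near: "norm (x m - z m) \<le> (e * K1 / K2) * norm (x m)"
    have "K1 * norm (x m - 0) \<le> norm (h (x m) - h 0)"
      using bilip x \<open>0 \<in> U\<close> by blast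
    then have lower: "e * (K1 * norm (x m)) \<le> e * norm (h (x m))"
      using \<open>e > 0\<close> \<open>h 0 = 0\<close> by simp
    have "norm (h (x m) - h (z m)) \<le> K2 * norm (x m - z m)"
      using bilip x z by blast
    also have "\<dots> \<le> K2 * ((e * K1 / K2) * norm (x m))"
      using near \<open>0 < K1\<close> \<open>K1 \<le> K2\<close> by (intro mult_left_mono) auto
    also have "\<dots> = e * (K1 * norm (x m))"
      using \<open>0 < K1\<close> \<open>K1 \<le> K2\<close> by simp
    finally show "norm (h (x m) - h (z m)) \<le> e * norm (h (x m))"
      using lower by linarith
  qed
qed

lemma approximated_by_bilipschitz_image:
  fixes h :: "'a::real_normed_vector \<Rightarrow> 'b::real_normed_vector"
  assumes bilip: "\<forall>x\<in>U. \<forall>y\<in>U. K1 * norm (x - y) \<le> norm (h x - h y) \<and> norm (h x - h y) \<le> K2 * norm (x - y)"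
    and "open U" and "0 \<in> U" and "h 0 = 0" and "0 < K1" and "K1 \<le> K2"
    and approx: "approximated_by P Q"
  shows "approximated_by (h ` (P \<inter> U)) (h ` (Q \<inter> U))"
  unfolding approximated_by_def
proof (intro allI impI, elim conjE)
  fix a :: "nat \<Rightarrow> 'b"
  assume a: "\<forall>m. a m \<in> h ` (P \<inter> U) - {0}" and "a \<longlonglongrightarrow> 0"
  then have "\<forall>m. \<exists>x\<in>P \<inter> U. a m = h x"
    by blast
  then obtain x where x: "\<And>m. x m \<in> P \<inter> U" and a_eq: "\<And>m. a m = h (x m)"
    by metis
  have x_nz: "x m \<noteq> 0" for m
    using a[rule_format, of m] a_eq[of m] \<open>h 0 = 0\<close> by auto
  have "\<forall>m. norm (x m) \<le> norm (a m) / K1"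
  proof
    fix m
    have "K1 * norm (x m - 0) \<le> norm (h (x m) - h 0)"
      using bilip x \<open>0 \<in> U\<close> by blast
    with \<open>0 < K1\<close> \<open>h 0 = 0\<close> show "norm (x m) \<le> norm (a m) / K1"
      by (simp add: a_eq pos_le_divide_eq mult.commute)
  qed
  then have "x \<longlonglongrightarrow> 0"
    by (rule Lim_null_comparison[OF always_eventually])
      (use tendsto_divide_zero[OF tendsto_norm_zero[OF \<open>a \<longlonglongrightarrow> 0\<close>]] in simp)
  then obtain y where y: "\<forall>m. y m \<in> Q" and xy: "asymp_close x y"
    using approx[unfolded approximated_by_def, rule_format, of x] x x_nz by blast
  have "\<forall>\<^sub>F m in sequentially. y m \<in> U"
    using topological_tendstoD[OF asymp_close_tendsto_zero[OF xy \<open>x \<longlonglongrightarrow> 0\<close>] \<open>open U\<close> \<open>0 \<in> U\<close>] .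
  then obtain N where N: "\<And>m. m \<ge> N \<Longrightarrow> y m \<in> U"
    unfolding eventually_sequentially by blast
  define z where "z m = y (max m N)" for m
  have z: "z m \<in> Q \<inter> U" for m
    using y N unfolding z_def by simp
  have "asymp_close x z"
    by (rule asymp_close_eventually_cong[OF xy always_eventually eventually_sequentiallyI[of N]])
      (simp_all add: z_def)
  then have "asymp_close a (\<lambda>m. h (z m))"
    unfolding a_eq using x z
    by (intro asymp_close_bilipschitz_image[OF bilip \<open>0 \<in> U\<close> \<open>h 0 = 0\<close> \<open>0 < K1\<close> \<open>K1 \<le> K2\<close>]) auto
  moreover have "\<forall>m. h (z m) \<in> h ` (Q \<inter> U)"
    using z by blast
  ultimately show "\<exists>b. (\<forall>m. b m \<in> h ` (Q \<inter> U)) \<and> asymp_close a b"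
    by (intro exI[of _ "\<lambda>m. h (z m)"]) simp
qed

theorem theorem2p13:
  fixes h :: "real^'n \<Rightarrow> real^'n" and U A B :: "(real^'n) set"
    and K1 K2 :: real
  assumes "open U" and "0 \<in> U" and "h 0 = 0" and "open (h ` U)"
    and "0 < K1" and "K1 \<le> K2"
    and "\<forall>x\<in>U. \<forall>y\<in>U. K1 * norm (x - y) \<le> norm (h x - h y) \<and> norm (h x - h y) \<le> K2 * norm (x - y)"
    and "0 \<in> closure A" and "0 \<in> closure B"
    and "SSP A"
  shows "SSP_rel (h ` (A \<inter> U)) B \<longleftrightarrow> SSP_rel (h ` (LD A \<inter> U)) B"
proof -
  have to_LD: "approximated_by (h ` (A \<inter> U)) (h ` (LD A \<inter> U))"
    using approximated_by_bilipschitz_image[OF assms(7,1,2,3,5,6) approximated_by_LD] .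
  have from_LD: "approximated_by (h ` (LD A \<inter> U)) (h ` (A \<inter> U))"
    using approximated_by_bilipschitz_image[OF assms(7,1,2,3,5,6) SSP_imp_LD_approximated_by[OF \<open>SSP A\<close>]] .
  have Dir_eq: "Dir (h ` (A \<inter> U)) = Dir (h ` (LD A \<inter> U))"
    using approximated_by_Dir_subset[OF to_LD] approximated_by_Dir_subset[OF from_LD] by (rule antisym)
  show ?thesis
  proof
    assume "SSP_rel (h ` (A \<inter> U)) B"
    then show "SSP_rel (h ` (LD A \<inter> U)) B"
      by (rule SSP_rel_transfer[OF _ to_LD Dir_eq[symmetric]])
  next
    assume "SSP_rel (h ` (LD A \<inter> U)) B"
    then show "SSP_rel (h ` (A \<inter> U)) B"
      by (rule SSP_rel_transfer[OF _ from_LD Dir_eq])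
  qed
qed

end
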